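(* Let $\mathcal G$ be a family of nonempty subsets of the finite set $\Omega$ that is closed under unions and nonempty intersections and covers $\Omega$, and let $G\in\mathcal G$. Let $\mu_1,\dots,\mu_K$ be the distinct $\mathcal G$-atoms contained in $G$, listed in any order such that $\mu_r\subsetneq\mu_s$ implies $r<s$, and put $U_j=\bigcup_{k=1}^j\mu_k$. Then (i) $G=\bigcup_{k=1}^K\mu_k$; and (ii) for every $j=2,\dots,K$, $U_{j-1}\cap\mu_j=\bigcup\{\mu_r: r<j,\ \mu_r\subsetneq\mu_j\}$.
   Context: The $\mathcal G$-atoms are the sets $m(\omega)=\bigcap\{H\in\mathcal G:\omega\in H\}$ for $\omega\in\Omega$. *)

theory Defs
  imports Main
begin

definition atom :: "'a set set \<Rightarrow> 'a \<Rightarrow> 'a set" where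
  "atom \<G> \<omega> = \<Inter>{H \<in> \<G>. \<omega> \<in> H}"

end

theory Submission
  imports Defs
begin

text \<open>Every point \<omega> lies in its atom, and the atom of \<omega> is contained in every atom containing \<omega>;
  so among the atoms inside G each point has a smallest one. Hence G is the union of these atoms.
  Moreover, if x \<in> \<mu> r \<inter> \<mu> j with r < j, the atom of x lies inside \<mu> r \<inter> \<mu> j; it cannot be
  \<mu> j itself, since then \<mu> j \<subset> \<mu> r would force j < r. So it is strictly inside \<mu> j and therefore
  listed before \<mu> j.\<close>

definition atoms_in :: "'a set set \<Rightarrow> 'a set \<Rightarrow> 'a set \<Rightarrow> 'a set set" where
  "atoms_in \<G> \<Omega> H = {atom \<G> \<omega> | \<omega>. \<omega> \<in> \<Omega> \<and> atom \<G> \<omega> \<subseteq> H}"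

lemma in_atom: "\<omega> \<in> atom \<G> \<omega>"
  unfolding atom_def by auto

lemma atom_subset: "H \<in> \<G> \<Longrightarrow> \<omega> \<in> H \<Longrightarrow> atom \<G> \<omega> \<subseteq> H"
  unfolding atom_def by blast

lemma atom_subset_atom: "\<omega> \<in> atom \<G> \<nu> \<Longrightarrow> atom \<G> \<omega> \<subseteq> atom \<G> \<nu>"
  unfolding atom_def by blast

lemma Union_atoms_in:
  assumes "H \<in> \<G>" and "H \<subseteq> \<Omega>"
  shows "\<Union>(atoms_in \<G> \<Omega> H) = H"
proof
  show "\<Union>(atoms_in \<G> \<Omega> H) \<subseteq> H"
    unfolding atoms_in_def by auto
  show "H \<subseteq> \<Union>(atoms_in \<G> \<Omega> H)"
  proof
    fix x assume "x \<in> H"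
    then have "atom \<G> x \<in> atoms_in \<G> \<Omega> H"
      using assms(2) atom_subset[OF assms(1)] unfolding atoms_in_def by blast
    then show "x \<in> \<Union>(atoms_in \<G> \<Omega> H)" using in_atom by (rule UnionI)
  qed
qed

lemma atoms_in_least:
  assumes "H \<subseteq> \<Omega>" and "A \<in> atoms_in \<G> \<Omega> H" and "x \<in> A"
  shows "\<exists>B \<in> atoms_in \<G> \<Omega> H. x \<in> B \<and> (\<forall>C \<in> atoms_in \<G> \<Omega> H. x \<in> C \<longrightarrow> B \<subseteq> C)"
proof (intro bexI conjI ballI impI)
  show "x \<in> atom \<G> x" by (rule in_atom)
  show "atom \<G> x \<subseteq> C" if C: "C \<in> atoms_in \<G> \<Omega> H" and "x \<in> C" for C
  proof -
    obtain \<nu> where "C = atom \<G> \<nu>" using C unfolding atoms_in_def by blast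
    with \<open>x \<in> C\<close> show ?thesis by (simp add: atom_subset_atom)
  qed
  obtain \<omega> where "A = atom \<G> \<omega>" and "atom \<G> \<omega> \<subseteq> H"
    using assms(2) unfolding atoms_in_def by auto
  from this(1) assms(3) have "atom \<G> x \<subseteq> atom \<G> \<omega>"
    by (simp add: atom_subset_atom)
  also note \<open>atom \<G> \<omega> \<subseteq> H\<close>
  finally have "atom \<G> x \<subseteq> H" .
  moreover have "x \<in> \<Omega>"
    using assms(1) subsetD[OF \<open>atom \<G> x \<subseteq> H\<close> in_atom] by (rule subsetD)
  ultimately show "atom \<G> x \<in> atoms_in \<G> \<Omega> H"
    unfolding atoms_in_def by auto
qed

lemma Union_prefix_Int_eq_Union_strict_subsets:
  fixes \<mu> :: "nat \<Rightarrow> 'a set"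
  assumes inj: "inj_on \<mu> {1..K}"
    and ord: "\<forall>r\<in>{1..K}. \<forall>s\<in>{1..K}. \<mu> r \<subset> \<mu> s \<longrightarrow> r < s"
    and least: "\<And>A x. A \<in> \<mu> ` {1..K} \<Longrightarrow> x \<in> A \<Longrightarrow>
      \<exists>B \<in> \<mu> ` {1..K}. x \<in> B \<and> (\<forall>C \<in> \<mu> ` {1..K}. x \<in> C \<longrightarrow> B \<subseteq> C)"
    and j: "j \<in> {1..K}"
  shows "(\<Union>k\<in>{1..j-1}. \<mu> k) \<inter> \<mu> j = \<Union>{\<mu> r | r. 1 \<le> r \<and> r < j \<and> \<mu> r \<subset> \<mu> j}"
proof
  show "\<Union>{\<mu> r | r. 1 \<le> r \<and> r < j \<and> \<mu> r \<subset> \<mu> j} \<subseteq> (\<Union>k\<in>{1..j-1}. \<mu> k) \<inter> \<mu> j"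
    by fastforce
  show "(\<Union>k\<in>{1..j-1}. \<mu> k) \<inter> \<mu> j \<subseteq> \<Union>{\<mu> r | r. 1 \<le> r \<and> r < j \<and> \<mu> r \<subset> \<mu> j}"
  proof
    fix x assume "x \<in> (\<Union>k\<in>{1..j-1}. \<mu> k) \<inter> \<mu> j"
    then obtain r where r: "1 \<le> r" "r < j" "x \<in> \<mu> r" and "x \<in> \<mu> j" by auto
    have rK: "r \<in> {1..K}" using r j by auto
    obtain t where t: "t \<in> {1..K}" "x \<in> \<mu> t"
      and t_least: "\<forall>k \<in> {1..K}. x \<in> \<mu> k \<longrightarrow> \<mu> t \<subseteq> \<mu> k"
      using least[OF imageI[OF j] \<open>x \<in> \<mu> j\<close>] by auto
    have "\<mu> t \<noteq> \<mu> j"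
    proof
      assume "\<mu> t = \<mu> j"
      then have "\<mu> j \<subseteq> \<mu> r" using t_least rK r(3) by blast
      moreover have "\<mu> j \<noteq> \<mu> r" using inj_onD[OF inj _ j rK] r(2) by auto
      ultimately have "j < r" using ord j rK by blast
      then show False using r(2) by simp
    qed
    then have "\<mu> t \<subset> \<mu> j" using t_least j \<open>x \<in> \<mu> j\<close> by blast
    moreover from this have "t < j" using ord t(1) j by blast
    ultimately show "x \<in> \<Union>{\<mu> r | r. 1 \<le> r \<and> r < j \<and> \<mu> r \<subset> \<mu> j}"
      using t by auto
  qed
qed

theorem lemma5:
  fixes \<Omega> :: "'a set" and \<G> :: "'a set set" and G :: "'a set"
    and \<mu> :: "nat \<Rightarrow> 'a set" and K :: nat
  assumes fin: "finite \<Omega>"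
    and sub: "\<forall>H\<in>\<G>. H \<noteq> {} \<and> H \<subseteq> \<Omega>"
    and un: "\<forall>H1\<in>\<G>. \<forall>H2\<in>\<G>. H1 \<union> H2 \<in> \<G>"
    and int: "\<forall>H1\<in>\<G>. \<forall>H2\<in>\<G>. H1 \<inter> H2 \<noteq> {} \<longrightarrow> H1 \<inter> H2 \<in> \<G>"
    and cover: "\<Union>\<G> = \<Omega>"
    and G: "G \<in> \<G>"
    and enum: "bij_betw \<mu> {1..K} {atom \<G> \<omega> | \<omega>. \<omega> \<in> \<Omega> \<and> atom \<G> \<omega> \<subseteq> G}"
    and ord: "\<forall>r\<in>{1..K}. \<forall>s\<in>{1..K}. \<mu> r \<subset> \<mu> s \<longrightarrow> r < s"
  shows "G = (\<Union>k\<in>{1..K}. \<mu> k) \<and>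
         (\<forall>j\<in>{2..K}. (\<Union>k\<in>{1..j-1}. \<mu> k) \<inter> \<mu> j
                      = \<Union>{\<mu> r | r. 1 \<le> r \<and> r < j \<and> \<mu> r \<subset> \<mu> j})"
proof -
  have "G \<subseteq> \<Omega>" using sub G by blast
  have image: "\<mu> ` {1..K} = atoms_in \<G> \<Omega> G"
    using enum unfolding atoms_in_def bij_betw_def by simp
  have "G = (\<Union>k\<in>{1..K}. \<mu> k)"
    using Union_atoms_in[OF G \<open>G \<subseteq> \<Omega>\<close>] unfolding image[symmetric] by simp
  moreover have "(\<Union>k\<in>{1..j-1}. \<mu> k) \<inter> \<mu> j = \<Union>{\<mu> r | r. 1 \<le> r \<and> r < j \<and> \<mu> r \<subset> \<mu> j}"
    if "j \<in> {2..K}" for j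
  proof (rule Union_prefix_Int_eq_Union_strict_subsets)
    show "inj_on \<mu> {1..K}" using enum by (simp add: bij_betw_def)
    show "\<forall>r\<in>{1..K}. \<forall>s\<in>{1..K}. \<mu> r \<subset> \<mu> s \<longrightarrow> r < s" by (fact ord)
    show "\<exists>B \<in> \<mu> ` {1..K}. x \<in> B \<and> (\<forall>C \<in> \<mu> ` {1..K}. x \<in> C \<longrightarrow> B \<subseteq> C)"
      if "A \<in> \<mu> ` {1..K}" "x \<in> A" for A x
      using atoms_in_least[OF \<open>G \<subseteq> \<Omega>\<close>] that unfolding image by simp
    show "j \<in> {1..K}" using that by simp
  qed
  ultimately show ?thesis by simp
qed

end
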